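(* Assume inhibitory coupling ($\varepsilon_{ij}\le0$ for all $i,j$ and $\varepsilon<0$). Assume the directed graph $G$ with an edge $j\to i$ exactly when $j\in\mathrm{Pre}(i)$ is strongly connected, and let $l_c\le N-1$ be its diameter. Let $\boldsymbol\delta(0)\in\mathbb R^N$, and define $\boldsymbol\delta(l)=A(\mathcal O_l)\boldsymbol\delta(l-1)$ for $l\ge1$. Here $\mathcal O_l$ is an ordering consistent with $\boldsymbol\delta(l-1)$: for each $i$, $\delta_{j_1(i)}(l-1)\ge\delta_{j_2(i)}(l-1)\ge\dots\ge\delta_{j_{k_i}(i)}(l-1)$. Then: 1. If all $\delta_i(0)\ge0$ and $\boldsymbol\delta(0)$ is not a multiple of $(1,\dots,1)^{\mathsf T}$, then $\max_i\delta_i(l)<\max_i\delta_i(0)$ for all $l\ge l_c$. 2. There is a constant $c\in\mathbb R$ such that $\boldsymbol\delta(l)\to c\,(1,\dots,1)^{\mathsf T}$ as $l\to\infty$; that is, the synchronous state is asymptotically stable (modulo uniform phase shifts).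
   Context: Let $U$ be a twice continuously differentiable, strictly increasing function on an interval $I\subseteq\mathbb R$ containing $(-\infty,1]$. Assume $U'>0$ and $U''<0$ on $I$, $U(0)=0$ and $U(1)=1$. Fix $N\ge 2$ and a delay $\tau\in(0,1)$. For each $i$ fix a nonempty set $\mathrm{Pre}(i)\subseteq\{1,\dots,N\}\setminus\{i\}$ and put $k_i=|\mathrm{Pre}(i)|$. Fix real couplings $\varepsilon_{ij}$ with $\varepsilon_{ij}\neq0$ if and only if $j\in\mathrm{Pre}(i)$, normalized so that $\sum_j\varepsilon_{ij}=\varepsilon$ for every $i$. An ordering $\mathcal O$ is a choice, for each $i$, of an enumeration $j_1(i),\dots,j_{k_i}(i)$ of $\mathrm{Pre}(i)$. For $n\in\{0,\dots,k_i\}$ define $$p_{i,n}=\frac{U'\Big(U^{-1}\big(U(\tau)+\sum_{m=1}^{n}\varepsilon_{ij_m(i)}\big)\Big)}{U'\big(U^{-1}(U(\tau)+\varepsilon)\big)}.$$ The stability matrix $A(\mathcal O)$ has entries - $A_{ii}=p_{i,0}$; - $A_{ij}=p_{i,n}-p_{i,n-1}$ if $j=j_n(i)$; - $A_{ij}=0$ if $j\notin\mathrm{Pre}(i)\cup\{i\}$. The diameter of a strongly connected digraph is the maximum over ordered pairs of vertices of the length of a shortest directed path between them. *)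

theory Defs
  imports "HOL-Analysis.Analysis"
begin

text \<open>Vertices are 0..N-1. An ordering is given as a function ord :: nat => nat list,
  where ord i is the enumeration j_1(i),...,j_{k_i}(i) of Pre(i) (0-indexed list).\<close>

definition valid_ordering :: "nat \<Rightarrow> (nat \<Rightarrow> nat set) \<Rightarrow> (nat \<Rightarrow> nat list) \<Rightarrow> bool" where
  "valid_ordering N Pre ord \<longleftrightarrow> (\<forall>i<N. distinct (ord i) \<and> set (ord i) = Pre i)"

text \<open>p_{i,n} of the paper; Uinv is the inverse of U on I, Ud is U'.\<close>
definition p_coef :: "(real \<Rightarrow> real) \<Rightarrow> real set \<Rightarrow> (real \<Rightarrow> real) \<Rightarrow> real \<Rightarrow> real
   \<Rightarrow> (nat \<Rightarrow> nat \<Rightarrow> real) \<Rightarrow> (nat \<Rightarrow> nat list) \<Rightarrow> nat \<Rightarrow> nat \<Rightarrow> real" where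
  "p_coef U I Ud \<tau> \<epsilon> eps ord i n =
     Ud (inv_into I U (U \<tau> + (\<Sum>m<n. eps i (ord i ! m)))) / Ud (inv_into I U (U \<tau> + \<epsilon>))"

definition stab_matrix :: "(real \<Rightarrow> real) \<Rightarrow> real set \<Rightarrow> (real \<Rightarrow> real) \<Rightarrow> real \<Rightarrow> real
   \<Rightarrow> (nat \<Rightarrow> nat \<Rightarrow> real) \<Rightarrow> (nat \<Rightarrow> nat list) \<Rightarrow> nat \<Rightarrow> nat \<Rightarrow> real" where
  "stab_matrix U I Ud \<tau> \<epsilon> eps ord i j =
     (if j = i then p_coef U I Ud \<tau> \<epsilon> eps ord i 0
      else if j \<in> set (ord i) then
        (let n = (LEAST n. n < length (ord i) \<and> ord i ! n = j) in
          p_coef U I Ud \<tau> \<epsilon> eps ord i (Suc n) - p_coef U I Ud \<tau> \<epsilon> eps ord i n)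
      else 0)"

definition has_path :: "nat \<Rightarrow> (nat \<Rightarrow> nat set) \<Rightarrow> nat \<Rightarrow> nat \<Rightarrow> nat \<Rightarrow> bool" where
  "has_path N Pre u v n \<longleftrightarrow> (\<exists>xs. length xs = Suc n \<and> hd xs = u \<and> last xs = v
       \<and> set xs \<subseteq> {..<N} \<and> (\<forall>k<n. xs ! k \<in> Pre (xs ! Suc k)))"

definition strongly_connected :: "nat \<Rightarrow> (nat \<Rightarrow> nat set) \<Rightarrow> bool" where
  "strongly_connected N Pre \<longleftrightarrow> (\<forall>u<N. \<forall>v<N. \<exists>n. has_path N Pre u v n)"

definition graph_dist :: "nat \<Rightarrow> (nat \<Rightarrow> nat set) \<Rightarrow> nat \<Rightarrow> nat \<Rightarrow> nat" where
  "graph_dist N Pre u v = (LEAST n. has_path N Pre u v n)"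

definition diameter :: "nat \<Rightarrow> (nat \<Rightarrow> nat set) \<Rightarrow> nat" where
  "diameter N Pre = Max {graph_dist N Pre u v | u v. u < N \<and> v < N}"

end

theory Submission
  imports Defs
begin

text \<open>
  Write the linearised dynamics as \<open>\<delta>(l+1) = A(l) \<delta>(l)\<close>.  Each matrix \<open>A(l)\<close>
  is row-stochastic, and its entries on the diagonal and on the edges \<open>j \<rightarrow> i\<close> of the
  graph are positive.  Since the entries only depend on the ordering of each row, and there
  are finitely many orderings, they are bounded below by one constant \<open>\<gamma> > 0\<close>, uniformly
  in \<open>l\<close>.  This reduces the theorem to a statement about averaging dynamics on a strongly
  connected graph (locale \<open>consensus_dynamics\<close>): the maximum never increases and the minimum
  never decreases; a deviation at vertex \<open>v\<close> reaches vertex \<open>i\<close> after \<open>n\<close> steps with weight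
  at least \<open>\<gamma>^n\<close> along a path; hence after \<open>diameter\<close> steps the maximum drops strictly and
  the spread \<open>max - min\<close> contracts by the factor \<open>1 - \<gamma>^diameter\<close>, which gives convergence
  to a common value.  The argument works for arbitrary orderings.
\<close>

lemma has_path_ends: "has_path N Pre v i n \<Longrightarrow> v < N \<and> i < N"
  unfolding has_path_def by (metis Suc_length_conv hd_in_set last_in_set lessThan_iff list.discI subsetD)

lemma has_path_0: "has_path N Pre v i 0 \<Longrightarrow> v = i"
  unfolding has_path_def by (metis last_ConsL length_0_conv length_Suc_conv list.sel(1))

lemma has_path_Suc:
  assumes "has_path N Pre v i (Suc n)"
  shows "\<exists>j. j \<in> Pre i \<and> has_path N Pre v j n"
proof -
  obtain xs where xs: "length xs = Suc (Suc n)" "hd xs = v" "last xs = i" "set xs \<subseteq> {..<N}"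
    "\<forall>k<Suc n. xs ! k \<in> Pre (xs ! Suc k)"
    using assms unfolding has_path_def by blast
  have "has_path N Pre v (xs ! n) n"
    unfolding has_path_def
  proof (intro exI[of _ "take (Suc n) xs"] conjI allI impI)
    show "hd (take (Suc n) xs) = v" using xs(1,2) by (simp add: hd_take)
    show "last (take (Suc n) xs) = xs ! n" using xs(1) by (subst last_conv_nth) auto
    show "set (take (Suc n) xs) \<subseteq> {..<N}" using xs(4) set_take_subset by fast
  qed (use xs in auto)
  moreover have "xs ! Suc n = i"
    using xs(1,3) last_conv_nth[of xs] by force
  then have "xs ! n \<in> Pre i"
    using xs(5) by auto
  ultimately show ?thesis by blast
qed

lemma path_within_diameter:
  assumes "strongly_connected N Pre" and "u < N" and "v < N"
  shows "\<exists>n \<le> diameter N Pre. has_path N Pre u v n"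
proof (intro exI conjI)
  obtain n where "has_path N Pre u v n"
    using assms unfolding strongly_connected_def by blast
  then show "has_path N Pre u v (graph_dist N Pre u v)"
    unfolding graph_dist_def by (rule LeastI)
  have "finite {graph_dist N Pre u v | u v. u < N \<and> v < N}"
    by (rule finite_image_set2) auto
  then show "graph_dist N Pre u v \<le> diameter N Pre"
    unfolding diameter_def by (rule Max_ge) (use assms in blast)
qed

lemma convex_comb_lower:
  fixes w x :: "nat \<Rightarrow> real"
  assumes "\<And>k. k < N \<Longrightarrow> 0 \<le> w k" and "(\<Sum>k<N. w k) = 1"
    and "\<And>k. k < N \<Longrightarrow> b \<le> x k" and "j < N"
  shows "w j * (x j - b) \<le> (\<Sum>k<N. w k * x k) - b"
proof -
  have "w j * (x j - b) \<le> (\<Sum>k<N. w k * (x k - b))"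
    by (rule member_le_sum) (use assms in auto)
  also have "\<dots> = (\<Sum>k<N. w k * x k) - (\<Sum>k<N. w k) * b"
    by (simp add: right_diff_distrib sum_subtractf sum_distrib_right)
  finally show ?thesis using assms(2) by simp
qed

text \<open>A nonnegative decreasing sequence which contracts by a factor \<open>q < 1\<close> every \<open>L\<close> steps
  tends to 0: its limit \<open>d\<close> satisfies \<open>0 \<le> d \<le> q d\<close>.\<close>

lemma decreasing_contraction_tendsto_zero:
  fixes D :: "nat \<Rightarrow> real"
  assumes "decseq D" and "\<And>l. 0 \<le> D l" and "\<And>l. D (l + L) \<le> q * D l" and "q < 1"
  shows "D \<longlonglongrightarrow> 0"
proof -
  define d where "d = (INF l. D l)"
  have lim: "D \<longlonglongrightarrow> d"
    unfolding d_def by (rule LIMSEQ_decseq_INF) (use assms(1,2) in \<open>auto intro!: bdd_belowI[of _ 0]\<close>)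
  have "d \<le> q * d"
    by (rule LIMSEQ_le[OF LIMSEQ_ignore_initial_segment[OF lim, of L] tendsto_mult_left[OF lim]])
      (use assms(3) in auto)
  moreover have "0 \<le> d"
    by (rule LIMSEQ_le_const[OF lim]) (use assms(2) in auto)
  ultimately have "d = 0"
    using assms(4) by (smt (verit) mult_le_cancel_right1)
  then show ?thesis using lim by simp
qed

locale consensus_dynamics =
  fixes N :: nat and Pre :: "nat \<Rightarrow> nat set" and a :: "nat \<Rightarrow> nat \<Rightarrow> nat \<Rightarrow> real"
    and \<gamma> :: real and \<delta> :: "nat \<Rightarrow> nat \<Rightarrow> real"
  assumes N_pos: "0 < N"
    and connected: "strongly_connected N Pre"
    and gamma_pos: "0 < \<gamma>"
    and weight_nonneg: "\<And>l i j. i < N \<Longrightarrow> j < N \<Longrightarrow> 0 \<le> a l i j"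
    and weight_sum: "\<And>l i. i < N \<Longrightarrow> (\<Sum>j<N. a l i j) = 1"
    and weight_self: "\<And>l i. i < N \<Longrightarrow> \<gamma> \<le> a l i i"
    and weight_pred: "\<And>l i j. i < N \<Longrightarrow> j \<in> Pre i \<Longrightarrow> \<gamma> \<le> a l i j"
    and step: "\<And>l i. i < N \<Longrightarrow> \<delta> (Suc l) i = (\<Sum>j<N. a l i j * \<delta> l j)"
begin

text \<open>The dynamics is linear, so upper-bound statements follow from lower-bound ones for \<open>-\<delta>\<close>.\<close>

lemma negated: "consensus_dynamics N Pre a \<gamma> (\<lambda>l i. - \<delta> l i)"
  by unfold_locales
    (use N_pos connected gamma_pos weight_nonneg weight_sum weight_self weight_pred step
      in \<open>auto simp: sum_negf\<close>)

lemma lower_bound_step: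
  assumes "\<And>k. k < N \<Longrightarrow> b \<le> \<delta> l k" and "i < N" and "j < N"
  shows "a l i j * (\<delta> l j - b) \<le> \<delta> (Suc l) i - b"
  using convex_comb_lower[of N "a l i" b "\<delta> l" j] assms weight_nonneg weight_sum step by simp

lemma lower_bound_persists:
  assumes "\<And>k. k < N \<Longrightarrow> b \<le> \<delta> l k" and "k < N"
  shows "b \<le> \<delta> (l + s) k"
  using assms(2)
proof (induction s arbitrary: k)
  case (Suc s)
  have "0 \<le> a (l + s) k k * (\<delta> (l + s) k - b)"
    using Suc weight_nonneg by simp
  also have "\<dots> \<le> \<delta> (Suc (l + s)) k - b"
    using lower_bound_step Suc by blast
  finally show ?case by simp
qed (use assms in simp)

text \<open>Shorter walks are padded with the self-loop weight.\<close>

lemma influence_spreads: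
  assumes low: "\<And>k. k < N \<Longrightarrow> b \<le> \<delta> l k"
    and path: "has_path N Pre v i n" and len: "n \<le> s"
  shows "\<gamma> ^ s * (\<delta> l v - b) \<le> \<delta> (l + s) i - b"
  using path len
proof (induction s arbitrary: i n)
  case 0
  then have "v = i" using has_path_0 by simp
  then show ?case by simp
next
  case (Suc s)
  have i: "i < N" using has_path_ends[OF Suc.prems(1)] by simp
  obtain j where j: "j < N" "j = i \<or> j \<in> Pre i"
    and IH: "\<gamma> ^ s * (\<delta> l v - b) \<le> \<delta> (l + s) j - b"
  proof (cases "n \<le> s")
    case True
    then show ?thesis using that[of i] i Suc by blast
  next
    case False
    then obtain j where "j \<in> Pre i" "has_path N Pre v j s"
      using has_path_Suc Suc.prems by (metis le_Suc_eq)
    then show ?thesis using that[of j] has_path_ends Suc.IH by blast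
  qed
  have "\<gamma> ^ Suc s * (\<delta> l v - b) \<le> \<gamma> * (\<delta> (l + s) j - b)"
    using mult_left_mono[OF IH, of \<gamma>] gamma_pos by simp
  also have "\<dots> \<le> a (l + s) i j * (\<delta> (l + s) j - b)"
    using weight_self weight_pred j i lower_bound_persists[OF low j(1)]
    by (intro mult_right_mono) auto
  also have "\<dots> \<le> \<delta> (l + Suc s) i - b"
    using lower_bound_step[OF lower_bound_persists[OF low] i j(1)] by simp
  finally show ?case .
qed

lemma upper_bound_persists:
  assumes "\<And>k. k < N \<Longrightarrow> \<delta> l k \<le> b" and "k < N"
  shows "\<delta> (l + s) k \<le> b"
proof -
  interpret neg: consensus_dynamics N Pre a \<gamma> "\<lambda>l i. - \<delta> l i" by (rule negated)
  show ?thesis using neg.lower_bound_persists[of "- b" l k s] assms by simp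
qed

lemma influence_spreads_upper:
  assumes "\<And>k. k < N \<Longrightarrow> \<delta> l k \<le> b"
    and "has_path N Pre v i n" and "n \<le> s"
  shows "\<gamma> ^ s * (b - \<delta> l v) \<le> b - \<delta> (l + s) i"
proof -
  interpret neg: consensus_dynamics N Pre a \<gamma> "\<lambda>l i. - \<delta> l i" by (rule negated)
  show ?thesis using neg.influence_spreads[of "- b" l v i n s] assms by simp
qed

definition max_val :: "nat \<Rightarrow> real" where
  "max_val l = Max (\<delta> l ` {..<N})"

definition min_val :: "nat \<Rightarrow> real" where
  "min_val l = Min (\<delta> l ` {..<N})"

lemma le_max_val: "i < N \<Longrightarrow> \<delta> l i \<le> max_val l"
  unfolding max_val_def by simp

lemma min_val_le: "i < N \<Longrightarrow> min_val l \<le> \<delta> l i"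
  unfolding min_val_def by simp

lemma max_val_attained: "\<exists>i<N. \<delta> l i = max_val l"
proof -
  have "max_val l \<in> \<delta> l ` {..<N}"
    unfolding max_val_def using N_pos by (intro Max_in) auto
  then show ?thesis by auto
qed

lemma min_val_attained: "\<exists>i<N. \<delta> l i = min_val l"
proof -
  have "min_val l \<in> \<delta> l ` {..<N}"
    unfolding min_val_def using N_pos by (intro Min_in) auto
  then show ?thesis by auto
qed

lemma max_val_decreasing: "max_val (l + s) \<le> max_val l"
  using max_val_attained[of "l + s"] upper_bound_persists[OF le_max_val] by metis

lemma min_val_increasing: "min_val l \<le> min_val (l + s)"
  using min_val_attained[of "l + s"] lower_bound_persists[OF min_val_le] by metis

text \<open>Part 1 of the theorem: unless the initial state is constant, some vertex starts below
  the maximum, and after \<open>diameter\<close> steps its deficit has reached every vertex.\<close>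

theorem max_drops_after_diameter:
  assumes nonconst: "\<not> (\<exists>c. \<forall>i<N. \<delta> 0 i = c)" and l: "diameter N Pre \<le> l"
  shows "max_val l < max_val 0"
proof -
  obtain v where v: "v < N" "\<delta> 0 v < max_val 0"
    using nonconst le_max_val by (metis order_le_imp_less_or_eq)
  have "\<delta> l i < max_val 0" if i: "i < N" for i
  proof -
    obtain n where "n \<le> diameter N Pre" "has_path N Pre v i n"
      using path_within_diameter[OF connected v(1) i] by blast
    then have "\<gamma> ^ l * (max_val 0 - \<delta> 0 v) \<le> max_val 0 - \<delta> (0 + l) i"
      using l by (intro influence_spreads_upper[where l = 0 and n = n]) (auto intro: le_max_val)
    moreover have "0 < \<gamma> ^ l * (max_val 0 - \<delta> 0 v)"
      using gamma_pos v by simp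
    ultimately show ?thesis by simp
  qed
  then show ?thesis using max_val_attained[of l] by metis
qed

text \<open>Every \<open>diameter\<close> steps the spread contracts: the maximal vertex pulls every vertex up
  by the fraction \<open>\<gamma>^diameter\<close> of the spread.\<close>

lemma spread_contraction:
  defines "L \<equiv> diameter N Pre"
  shows "max_val (l + L) - min_val (l + L) \<le> (1 - \<gamma> ^ L) * (max_val l - min_val l)"
proof -
  obtain v where v: "v < N" "\<delta> l v = max_val l" using max_val_attained by blast
  have "min_val l + \<gamma> ^ L * (max_val l - min_val l) \<le> \<delta> (l + L) i" if i: "i < N" for i
  proof -
    obtain n where "n \<le> L" "has_path N Pre v i n"
      using path_within_diameter[OF connected v(1) i] unfolding L_def by blast
    then have "\<gamma> ^ L * (\<delta> l v - min_val l) \<le> \<delta> (l + L) i - min_val l"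
      by (intro influence_spreads[where l = l and n = n]) (auto intro: min_val_le)
    then show ?thesis using v(2) by simp
  qed
  then have "min_val l + \<gamma> ^ L * (max_val l - min_val l) \<le> min_val (l + L)"
    using min_val_attained[of "l + L"] by metis
  moreover have "max_val (l + L) \<le> max_val l" by (rule max_val_decreasing)
  ultimately show ?thesis by (simp add: algebra_simps)
qed

text \<open>Part 2 of the theorem: the maximum decreases, the spread tends to 0, so all components
  are squeezed to the limit of the maximum.\<close>

theorem converges_to_consensus: "\<exists>c. \<forall>i<N. (\<lambda>l. \<delta> l i) \<longlonglongrightarrow> c"
proof -
  define D where "D l = max_val l - min_val l" for l
  have max_dec: "decseq max_val"
    using max_val_decreasing[of _ 1] by (intro decseq_SucI) simp
  have D_lim: "D \<longlonglongrightarrow> 0"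
  proof (rule decreasing_contraction_tendsto_zero)
    show "decseq D"
    proof (rule decseq_SucI)
      show "D (Suc l) \<le> D l" for l
        using max_val_decreasing[of l 1] min_val_increasing[of l 1] by (simp add: D_def)
    qed
    show "0 \<le> D l" for l
      using le_max_val[OF N_pos, of l] min_val_le[OF N_pos, of l] by (simp add: D_def)
    show "D (l + diameter N Pre) \<le> (1 - \<gamma> ^ diameter N Pre) * D l" for l
      unfolding D_def by (rule spread_contraction)
    show "1 - \<gamma> ^ diameter N Pre < 1" using gamma_pos by simp
  qed
  have "bdd_below (range max_val)"
  proof (rule bdd_belowI2)
    show "min_val 0 \<le> max_val l" for l
      using min_val_increasing[of 0 l] min_val_le[OF N_pos, of l] le_max_val[OF N_pos, of l]
      by simp
  qed
  then have max_lim: "max_val \<longlonglongrightarrow> (INF l. max_val l)"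
    using max_dec by (rule LIMSEQ_decseq_INF)
  then have min_lim: "min_val \<longlonglongrightarrow> (INF l. max_val l)"
    using tendsto_diff[OF max_lim D_lim] by (simp add: D_def)
  have "(\<lambda>l. \<delta> l i) \<longlonglongrightarrow> (INF l. max_val l)" if "i < N" for i
    by (rule tendsto_sandwich[OF _ _ min_lim max_lim]) (use that min_val_le le_max_val in auto)
  then show ?thesis by blast
qed

end

lemma strict_mono_on_of_pos_deriv:
  fixes f f' :: "real \<Rightarrow> real" and I :: "real set"
  assumes I: "is_interval I"
    and deriv: "\<And>x. x \<in> I \<Longrightarrow> (f has_real_derivative f' x) (at x within I)"
    and pos: "\<And>x. x \<in> I \<Longrightarrow> 0 < f' x"
  shows "strict_mono_on I f"
proof (rule strict_mono_onI)
  fix x y assume xI: "x \<in> I" and yI: "y \<in> I" and xy: "x < y"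
  have sub: "{x..y} \<subseteq> I"
  proof
    fix z assume "z \<in> {x..y}"
    then have "x \<le> z" "z \<le> y" by auto
    then show "z \<in> I" using I xI yI unfolding is_interval_1 by blast
  qed
  have cont: "continuous_on I f"
    using deriv DERIV_continuous continuous_on_eq_continuous_within by blast
  show "f x < f y"
  proof (rule DERIV_pos_imp_increasing_open[OF xy])
    fix z assume z: "x < z" "z < y"
    have zI: "z \<in> I" using z sub by auto
    have "at z within I = at z"
      by (rule at_within_open_subset[of z "{x<..<y}"]) (use z sub in auto)
    then show "\<exists>d. (f has_real_derivative d) (at z) \<and> 0 < d"
      using deriv[OF zI] pos[OF zI] by auto
  qed (rule continuous_on_subset[OF cont sub])
qed

lemma concave_below_tangent_at_0:
  fixes U Ud :: "real \<Rightarrow> real" and I :: "real set" and a :: real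
  assumes I_sup: "{..1} \<subseteq> I"
    and U_deriv: "\<And>x. x \<in> I \<Longrightarrow> (U has_real_derivative Ud x) (at x within I)"
    and Ud_anti: "strict_mono_on I (\<lambda>x. - Ud x)"
    and a: "a \<le> 0"
  shows "U a \<le> U 0 + a * Ud 0"
proof (cases "a = 0")
  case False
  then have a_neg: "a < 0" using a by simp
  have "(U has_real_derivative Ud x) (at x)" if "a \<le> x" "x \<le> 0" for x
  proof -
    have "at x within I = at x"
      by (rule at_within_open_subset[of x "{..<1}"]) (use that I_sup in auto)
    moreover have "x \<in> I" using that I_sup by auto
    ultimately show ?thesis using U_deriv[of x] by simp
  qed
  then obtain z where z: "a < z" "z < 0" "U 0 - U a = (0 - a) * Ud z"
    using MVT2[OF a_neg] by blast
  have "z \<in> I" "(0::real) \<in> I" using z I_sup by auto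
  then have "Ud 0 < Ud z"
    using strict_mono_onD[OF Ud_anti, of z 0] z by simp
  then have "a * Ud z \<le> a * Ud 0"
    using a_neg by (intro mult_left_mono_neg) auto
  then show ?thesis using z(3) by (simp add: algebra_simps)
qed simp

text \<open>Every value \<open>t \<le> U \<tau>\<close> is attained left of \<open>\<tau>\<close>; the tangent bound shows that \<open>U\<close>
  reaches below \<open>t\<close>, and the intermediate value theorem does the rest.\<close>

lemma U_onto_below_tau:
  fixes U Ud :: "real \<Rightarrow> real" and I :: "real set" and \<tau> t :: real
  assumes I_sup: "{..1} \<subseteq> I"
    and U_deriv: "\<And>x. x \<in> I \<Longrightarrow> (U has_real_derivative Ud x) (at x within I)"
    and Ud_anti: "strict_mono_on I (\<lambda>x. - Ud x)"
    and Ud_pos: "\<And>x. x \<in> I \<Longrightarrow> 0 < Ud x"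
    and U0: "U 0 = 0" and tau: "0 < \<tau>" "\<tau> < 1"
    and t: "t \<le> U \<tau>"
  shows "\<exists>x. x \<le> \<tau> \<and> U x = t"
proof -
  define a where "a = min 0 (t / Ud 0)"
  have "(0::real) \<in> I" using I_sup by auto
  then have Ud0: "0 < Ud 0" by (rule Ud_pos)
  have "U a \<le> a * Ud 0"
    using concave_below_tangent_at_0[OF I_sup U_deriv Ud_anti, of a] U0 by (simp add: a_def)
  also have "\<dots> \<le> t"
    using Ud0 by (auto simp: a_def min_def field_simps)
  finally have Ua: "U a \<le> t" .
  have cont: "continuous_on {a..\<tau>} U"
  proof (rule continuous_on_subset)
    show "continuous_on I U"
      using U_deriv DERIV_continuous continuous_on_eq_continuous_within by blast
    show "{a..\<tau>} \<subseteq> I" using I_sup tau by auto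
  qed
  have "a \<le> \<tau>" using tau by (simp add: a_def)
  then show ?thesis using IVT'[OF Ua t _ cont] by blast
qed

definition kick_slope :: "(real \<Rightarrow> real) \<Rightarrow> real set \<Rightarrow> (real \<Rightarrow> real) \<Rightarrow> real \<Rightarrow> real \<Rightarrow> real" where
  "kick_slope U I Ud \<tau> s = Ud (inv_into I U (U \<tau> + s))"

text \<open>For inhibitory kicks \<open>s \<le> 0\<close> the slope is positive, and it grows as the kick gets
  stronger, because \<open>U\<^sup>-\<^sup>1\<close> is increasing and \<open>U'\<close> is decreasing.\<close>

lemma kick_slope_pos_decreasing:
  fixes U Ud :: "real \<Rightarrow> real" and I :: "real set" and \<tau> :: real
  assumes U_mono: "strict_mono_on I U"
    and Ud_anti: "strict_mono_on I (\<lambda>x. - Ud x)"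
    and Ud_pos: "\<And>x. x \<in> I \<Longrightarrow> 0 < Ud x"
    and onto: "\<And>t. t \<le> U \<tau> \<Longrightarrow> \<exists>x. x \<le> \<tau> \<and> U x = t"
    and I_sup: "{..1} \<subseteq> I" and tau: "\<tau> < 1"
  shows "\<And>s. s \<le> 0 \<Longrightarrow> 0 < kick_slope U I Ud \<tau> s"
    and "\<And>s s'. s' < s \<Longrightarrow> s \<le> 0 \<Longrightarrow> kick_slope U I Ud \<tau> s < kick_slope U I Ud \<tau> s'"
proof -
  have pre: "inv_into I U (U \<tau> + s) \<in> I \<and> U (inv_into I U (U \<tau> + s)) = U \<tau> + s"
    if s: "s \<le> 0" for s
  proof -
    obtain x where x: "x \<le> \<tau>" "U x = U \<tau> + s" using onto[of "U \<tau> + s"] s by auto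
    have "x \<in> I" using x tau I_sup by auto
    moreover have "inv_into I U (U \<tau> + s) = x"
      using inv_into_f_f[OF strict_mono_on_imp_inj_on[OF U_mono] \<open>x \<in> I\<close>] x(2) by simp
    ultimately show ?thesis using x by simp
  qed
  show "0 < kick_slope U I Ud \<tau> s" if "s \<le> 0" for s
    using pre[OF that] Ud_pos unfolding kick_slope_def by blast
  show "kick_slope U I Ud \<tau> s < kick_slope U I Ud \<tau> s'" if "s' < s" "s \<le> 0" for s s'
  proof -
    let ?x = "inv_into I U (U \<tau> + s')" and ?y = "inv_into I U (U \<tau> + s)"
    have "?x \<in> I" "?y \<in> I" "U ?x < U ?y" using pre[of s] pre[of s'] that by auto
    then have "?x < ?y" using strict_mono_on_less[OF U_mono] by blast
    then show ?thesis
      using strict_mono_onD[OF Ud_anti] \<open>?x \<in> I\<close> \<open>?y \<in> I\<close> unfolding kick_slope_def by fastforce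
  qed
qed

lemma kick_slope_of_concave_potential:
  fixes U Ud Udd :: "real \<Rightarrow> real" and I :: "real set" and \<tau> :: real
  assumes I_int: "is_interval I" and I_sup: "{..1} \<subseteq> I"
    and U_deriv: "\<And>x. x \<in> I \<Longrightarrow> (U has_real_derivative Ud x) (at x within I)"
    and Ud_deriv: "\<And>x. x \<in> I \<Longrightarrow> (Ud has_real_derivative Udd x) (at x within I)"
    and Ud_pos: "\<And>x. x \<in> I \<Longrightarrow> 0 < Ud x"
    and Udd_neg: "\<And>x. x \<in> I \<Longrightarrow> Udd x < 0"
    and U0: "U 0 = 0" and tau: "0 < \<tau>" "\<tau> < 1"
  shows "\<And>s. s \<le> 0 \<Longrightarrow> 0 < kick_slope U I Ud \<tau> s"
    and "\<And>s s'. s' < s \<Longrightarrow> s \<le> 0 \<Longrightarrow> kick_slope U I Ud \<tau> s < kick_slope U I Ud \<tau> s'"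
proof -
  have U_mono: "strict_mono_on I U"
    by (rule strict_mono_on_of_pos_deriv[OF I_int U_deriv Ud_pos])
  have Ud_anti: "strict_mono_on I (\<lambda>x. - Ud x)"
    by (rule strict_mono_on_of_pos_deriv[OF I_int, of _ "\<lambda>x. - Udd x"])
      (use Ud_deriv Udd_neg in \<open>auto intro: DERIV_minus\<close>)
  have onto: "\<And>t. t \<le> U \<tau> \<Longrightarrow> \<exists>x. x \<le> \<tau> \<and> U x = t"
    using U_onto_below_tau[OF I_sup U_deriv Ud_anti Ud_pos U0 tau] by blast
  show "0 < kick_slope U I Ud \<tau> s" if "s \<le> 0" for s
    by (rule kick_slope_pos_decreasing(1)[where \<tau> = \<tau>])
      (fact U_mono Ud_anti Ud_pos onto I_sup tau(2) that)+
  show "kick_slope U I Ud \<tau> s < kick_slope U I Ud \<tau> s'" if "s' < s" "s \<le> 0" for s s'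
    by (rule kick_slope_pos_decreasing(2)[where \<tau> = \<tau>])
      (fact U_mono Ud_anti Ud_pos onto I_sup tau(2) that)+
qed

lemma stab_matrix_self: "stab_matrix U I Ud \<tau> \<epsilon> eps ord i i = p_coef U I Ud \<tau> \<epsilon> eps ord i 0"
  by (simp add: stab_matrix_def)

lemma stab_matrix_outside:
  "j \<noteq> i \<Longrightarrow> j \<notin> set (ord i) \<Longrightarrow> stab_matrix U I Ud \<tau> \<epsilon> eps ord i j = 0"
  by (simp add: stab_matrix_def)

lemma stab_matrix_at_position:
  assumes "distinct (ord i)" "n < length (ord i)" "ord i ! n \<noteq> i"
  shows "stab_matrix U I Ud \<tau> \<epsilon> eps ord i (ord i ! n)
           = p_coef U I Ud \<tau> \<epsilon> eps ord i (Suc n) - p_coef U I Ud \<tau> \<epsilon> eps ord i n"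
proof -
  have "(LEAST m. m < length (ord i) \<and> ord i ! m = ord i ! n) = n"
    by (rule Least_equality) (use assms nth_eq_iff_index_eq in auto)
  then show ?thesis using assms by (simp add: stab_matrix_def Let_def)
qed

lemma stab_matrix_row_only:
  "stab_matrix U I Ud \<tau> \<epsilon> eps ord i j = stab_matrix U I Ud \<tau> \<epsilon> eps (\<lambda>_. ord i) i j"
  by (simp add: stab_matrix_def p_coef_def)

text \<open>The coefficients \<open>p_coef\<close> increase from \<open>p_{i,0} > 0\<close> to \<open>p_{i,k_i} = 1\<close> because the partial
  sums of the (negative) couplings decrease from 0 to \<open>\<epsilon>\<close>.  Hence row \<open>i\<close> is positive on \<open>i\<close> and
  on \<open>Pre i\<close>, and its entries telescope to 1.\<close>

lemma stab_row_stochastic: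
  fixes U Ud :: "real \<Rightarrow> real" and I :: "real set" and \<tau> \<epsilon> :: real
    and eps :: "nat \<Rightarrow> nat \<Rightarrow> real" and ord :: "nat \<Rightarrow> nat list"
  assumes slope_pos: "\<And>s. s \<le> 0 \<Longrightarrow> 0 < kick_slope U I Ud \<tau> s"
    and slope_decr: "\<And>s s'. s' < s \<Longrightarrow> s \<le> 0 \<Longrightarrow> kick_slope U I Ud \<tau> s < kick_slope U I Ud \<tau> s'"
    and dist: "distinct (ord i)" and no_self: "i \<notin> set (ord i)"
    and eps_neg: "\<And>j. j \<in> set (ord i) \<Longrightarrow> eps i j < 0"
    and eps_total: "(\<Sum>j\<in>set (ord i). eps i j) = \<epsilon>"
  shows "\<And>j. j \<in> insert i (set (ord i)) \<Longrightarrow> 0 < stab_matrix U I Ud \<tau> \<epsilon> eps ord i j"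
    and "(\<Sum>j\<in>insert i (set (ord i)). stab_matrix U I Ud \<tau> \<epsilon> eps ord i j) = 1"
proof -
  define xs where "xs = ord i"
  define S where "S n = (\<Sum>m<n. eps i (xs ! m))" for n
  define p where "p n = p_coef U I Ud \<tau> \<epsilon> eps ord i n" for n
  have p_eq: "p n = kick_slope U I Ud \<tau> (S n) / kick_slope U I Ud \<tau> \<epsilon>" for n
    by (simp add: p_def S_def xs_def p_coef_def kick_slope_def)
  have bij: "bij_betw ((!) xs) {..<length xs} (set xs)"
    by (rule bij_betw_nth) (use dist in \<open>auto simp: xs_def\<close>)
  have S_le: "S n \<le> 0" if "n \<le> length xs" for n
    unfolding S_def using that eps_neg by (intro sum_nonpos) (auto simp: xs_def less_imp_le)
  have S_Suc: "S (Suc n) < S n" if "n < length xs" for n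
    unfolding S_def using eps_neg[of "xs ! n"] that by (simp add: xs_def)
  have S_last: "S (length xs) = \<epsilon>"
    using sum.reindex_bij_betw[OF bij, of "eps i"] eps_total by (simp add: S_def xs_def)
  have slope_eps: "0 < kick_slope U I Ud \<tau> \<epsilon>"
    using slope_pos S_le[of "length xs"] S_last by simp
  have p_pos: "0 < p n" if "n \<le> length xs" for n
    using slope_pos[OF S_le[OF that]] slope_eps by (simp add: p_eq)
  have p_incr: "p n < p (Suc n)" if "n < length xs" for n
    using slope_decr[OF S_Suc[OF that] S_le] that slope_eps
    by (simp add: p_eq divide_strict_right_mono)
  have p_last: "p (length xs) = 1"
    using slope_eps by (simp add: p_eq S_last)
  have entry: "stab_matrix U I Ud \<tau> \<epsilon> eps ord i (xs ! n) = p (Suc n) - p n"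
    if "n < length xs" for n
    using stab_matrix_at_position[of ord i n] that dist no_self nth_mem
    by (fastforce simp: xs_def p_def)
  show "0 < stab_matrix U I Ud \<tau> \<epsilon> eps ord i j" if j_mem: "j \<in> insert i (set (ord i))" for j
  proof (cases "j = i")
    case True
    then show ?thesis using p_pos[of 0] by (simp add: stab_matrix_self p_def)
  next
    case False
    then obtain n where "n < length xs" "j = xs ! n"
      using j_mem by (auto simp: xs_def in_set_conv_nth)
    then show ?thesis using entry p_incr by simp
  qed
  have "(\<Sum>j\<in>insert i (set (ord i)). stab_matrix U I Ud \<tau> \<epsilon> eps ord i j)
          = stab_matrix U I Ud \<tau> \<epsilon> eps ord i i + (\<Sum>j\<in>set xs. stab_matrix U I Ud \<tau> \<epsilon> eps ord i j)"
    using no_self by (simp add: xs_def)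
  also have "\<dots> = p 0 + (\<Sum>n<length xs. p (Suc n) - p n)"
    using sum.reindex_bij_betw[OF bij, of "stab_matrix U I Ud \<tau> \<epsilon> eps ord i"] entry
    by (simp add: stab_matrix_self p_def)
  also have "(\<Sum>n<length xs. p (Suc n) - p n) = p (length xs) - p 0"
    by (rule sum_lessThan_telescope)
  finally show "(\<Sum>j\<in>insert i (set (ord i)). stab_matrix U I Ud \<tau> \<epsilon> eps ord i j) = 1"
    using p_last by linarith
qed

lemma stab_row_valid_ordering:
  fixes U Ud :: "real \<Rightarrow> real" and I :: "real set" and \<tau> \<epsilon> :: real
    and eps :: "nat \<Rightarrow> nat \<Rightarrow> real" and ord :: "nat \<Rightarrow> nat list"
  assumes slope_pos: "\<And>s. s \<le> 0 \<Longrightarrow> 0 < kick_slope U I Ud \<tau> s"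
    and slope_decr: "\<And>s s'. s' < s \<Longrightarrow> s \<le> 0 \<Longrightarrow> kick_slope U I Ud \<tau> s < kick_slope U I Ud \<tau> s'"
    and Pre_sub: "Pre i \<subseteq> {..<N} - {i}" and i: "i < N"
    and eps_supp: "\<And>j. j < N \<Longrightarrow> eps i j \<noteq> 0 \<longleftrightarrow> j \<in> Pre i"
    and inhib: "\<And>j. j < N \<Longrightarrow> eps i j \<le> 0"
    and eps_sum: "(\<Sum>j<N. eps i j) = \<epsilon>"
    and dist: "distinct (ord i)" and set_ord: "set (ord i) = Pre i"
  shows "\<And>j. j \<in> insert i (Pre i) \<Longrightarrow> 0 < stab_matrix U I Ud \<tau> \<epsilon> eps ord i j"
    and "\<And>j. 0 \<le> stab_matrix U I Ud \<tau> \<epsilon> eps ord i j"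
    and "(\<Sum>j<N. stab_matrix U I Ud \<tau> \<epsilon> eps ord i j) = 1"
proof -
  have no_self: "i \<notin> set (ord i)" using Pre_sub set_ord by auto
  have eps_neg: "eps i j < 0" if "j \<in> set (ord i)" for j
    using that set_ord Pre_sub eps_supp[of j] inhib[of j] by force
  have "(\<Sum>j\<in>set (ord i). eps i j) = (\<Sum>j<N. eps i j)"
    by (rule sum.mono_neutral_left) (use Pre_sub set_ord eps_supp in auto)
  then have eps_total: "(\<Sum>j\<in>set (ord i). eps i j) = \<epsilon>" using eps_sum by simp
  have row_pos: "0 < stab_matrix U I Ud \<tau> \<epsilon> eps ord i j" if "j \<in> insert i (set (ord i))" for j
    by (rule stab_row_stochastic(1)[where eps = eps and ord = ord and i = i])
      (fact slope_pos slope_decr dist no_self eps_neg eps_total that)+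
  have row_sum: "(\<Sum>j\<in>insert i (set (ord i)). stab_matrix U I Ud \<tau> \<epsilon> eps ord i j) = 1"
    by (rule stab_row_stochastic(2)[where eps = eps and ord = ord and i = i])
      (fact slope_pos slope_decr dist no_self eps_neg eps_total)+
  show pos: "0 < stab_matrix U I Ud \<tau> \<epsilon> eps ord i j" if "j \<in> insert i (Pre i)" for j
    using row_pos that set_ord by simp
  show "0 \<le> stab_matrix U I Ud \<tau> \<epsilon> eps ord i j" for j
    using pos[of j] stab_matrix_outside[of j i ord] set_ord by (cases "j \<in> insert i (Pre i)") auto
  have "(\<Sum>j<N. stab_matrix U I Ud \<tau> \<epsilon> eps ord i j)
          = (\<Sum>j\<in>insert i (Pre i). stab_matrix U I Ud \<tau> \<epsilon> eps ord i j)"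
    by (rule sum.mono_neutral_right) (use i Pre_sub set_ord stab_matrix_outside in auto)
  then show "(\<Sum>j<N. stab_matrix U I Ud \<tau> \<epsilon> eps ord i j) = 1" using row_sum set_ord by simp
qed

lemma finite_positive_lower_bound:
  fixes f :: "'a \<Rightarrow> real"
  assumes "finite A" and "\<And>x. x \<in> A \<Longrightarrow> 0 < f x"
  shows "\<exists>\<gamma>>0. \<forall>x\<in>A. \<gamma> \<le> f x"
proof (intro exI[of _ "Min (insert 1 (f ` A))"] conjI ballI)
  show "0 < Min (insert 1 (f ` A))" using assms by simp
  show "Min (insert 1 (f ` A)) \<le> f x" if "x \<in> A" for x
    using assms that by simp
qed

text \<open>Since there are only finitely many enumerations of each \<open>Pre i\<close>, the positive entries of
  all stability matrices are bounded below by a single \<open>\<gamma> > 0\<close>.\<close>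

lemma stab_uniform_lower_bound:
  fixes U Ud :: "real \<Rightarrow> real" and I :: "real set" and \<tau> \<epsilon> :: real
    and eps :: "nat \<Rightarrow> nat \<Rightarrow> real"
  assumes Pre_sub: "\<And>i. i < N \<Longrightarrow> Pre i \<subseteq> {..<N}"
    and pos: "\<And>ord i j. i < N \<Longrightarrow> distinct (ord i) \<Longrightarrow> set (ord i) = Pre i \<Longrightarrow>
                j \<in> insert i (Pre i) \<Longrightarrow> 0 < stab_matrix U I Ud \<tau> \<epsilon> eps ord i j"
  shows "\<exists>\<gamma>>0. \<forall>ord i j. i < N \<longrightarrow> distinct (ord i) \<longrightarrow> set (ord i) = Pre i \<longrightarrow>
           j \<in> insert i (Pre i) \<longrightarrow> \<gamma> \<le> stab_matrix U I Ud \<tau> \<epsilon> eps ord i j"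
proof -
  define A where "A = {(xs, i, j). i < N \<and> distinct xs \<and> set xs = Pre i \<and> j \<in> insert i (Pre i)}"
  define f where "f = (\<lambda>(xs, i, j). stab_matrix U I Ud \<tau> \<epsilon> eps (\<lambda>_. xs) i j)"
  have "A \<subseteq> {xs. set xs \<subseteq> {..<N} \<and> distinct xs} \<times> {..<N} \<times> {..<N}"
    using Pre_sub by (auto simp: A_def)
  then have "finite A"
    by (rule finite_subset) (intro finite_cartesian_product finite_subset_distinct; simp)
  moreover have "0 < f x" if xA: "x \<in> A" for x
  proof -
    obtain xs i j where "x = (xs, i, j)" "i < N" "distinct xs" "set xs = Pre i"
      "j \<in> insert i (Pre i)"
      using xA by (auto simp: A_def)
    then show ?thesis using pos[of i "\<lambda>_. xs" j] by (simp add: f_def)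
  qed
  ultimately obtain \<gamma> where \<gamma>: "0 < \<gamma>" "\<forall>x\<in>A. \<gamma> \<le> f x"
    using finite_positive_lower_bound by blast
  show ?thesis
  proof (intro exI[of _ \<gamma>] conjI allI impI)
    fix ord i j assume "i < N" "distinct (ord i)" "set (ord i) = Pre i" "j \<in> insert i (Pre i)"
    then have "(ord i, i, j) \<in> A" by (simp add: A_def)
    then have "\<gamma> \<le> f (ord i, i, j)" using \<gamma>(2) by blast
    also have "f (ord i, i, j) = stab_matrix U I Ud \<tau> \<epsilon> eps ord i j"
      by (simp add: f_def stab_matrix_row_only[of U I Ud \<tau> \<epsilon> eps ord i j])
    finally show "\<gamma> \<le> stab_matrix U I Ud \<tau> \<epsilon> eps ord i j" .
  qed (rule \<gamma>(1))
qed

lemma stab_matrices_uniformly_positive: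
  fixes U Ud :: "real \<Rightarrow> real" and I :: "real set" and \<tau> \<epsilon> :: real
    and eps :: "nat \<Rightarrow> nat \<Rightarrow> real"
  assumes slope_pos: "\<And>s. s \<le> 0 \<Longrightarrow> 0 < kick_slope U I Ud \<tau> s"
    and slope_decr: "\<And>s s'. s' < s \<Longrightarrow> s \<le> 0 \<Longrightarrow> kick_slope U I Ud \<tau> s < kick_slope U I Ud \<tau> s'"
    and Pre_sub: "\<And>i. i < N \<Longrightarrow> Pre i \<subseteq> {..<N} - {i}"
    and eps_supp: "\<And>i j. i < N \<Longrightarrow> j < N \<Longrightarrow> (eps i j \<noteq> 0 \<longleftrightarrow> j \<in> Pre i)"
    and inhib: "\<And>i j. i < N \<Longrightarrow> j < N \<Longrightarrow> eps i j \<le> 0"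
    and eps_sum: "\<And>i. i < N \<Longrightarrow> (\<Sum>j<N. eps i j) = \<epsilon>"
  shows "\<exists>\<gamma>>0. \<forall>ord i. i < N \<longrightarrow> distinct (ord i) \<longrightarrow> set (ord i) = Pre i \<longrightarrow>
           (\<forall>j. 0 \<le> stab_matrix U I Ud \<tau> \<epsilon> eps ord i j)
           \<and> (\<Sum>j<N. stab_matrix U I Ud \<tau> \<epsilon> eps ord i j) = 1
           \<and> (\<forall>j\<in>insert i (Pre i). \<gamma> \<le> stab_matrix U I Ud \<tau> \<epsilon> eps ord i j)"
proof -
  have row: "(\<forall>j\<in>insert i (Pre i). 0 < stab_matrix U I Ud \<tau> \<epsilon> eps ord i j)
      \<and> (\<forall>j. 0 \<le> stab_matrix U I Ud \<tau> \<epsilon> eps ord i j)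
      \<and> (\<Sum>j<N. stab_matrix U I Ud \<tau> \<epsilon> eps ord i j) = 1"
    if "i < N" "distinct (ord i)" "set (ord i) = Pre i" for i ord
    using stab_row_valid_ordering[where N = N and Pre = Pre and \<epsilon> = \<epsilon> and eps = eps and i = i
        and ord = ord, OF slope_pos slope_decr Pre_sub[OF that(1)] that(1)
        eps_supp[OF that(1)] inhib[OF that(1)] eps_sum[OF that(1)] that(2,3)]
    by blast
  moreover obtain \<gamma> where "0 < \<gamma>" "\<forall>ord i j. i < N \<longrightarrow> distinct (ord i) \<longrightarrow> set (ord i) = Pre i \<longrightarrow>
      j \<in> insert i (Pre i) \<longrightarrow> \<gamma> \<le> stab_matrix U I Ud \<tau> \<epsilon> eps ord i j"
    using stab_uniform_lower_bound[of N Pre U I Ud \<tau> \<epsilon> eps] row Pre_sub by blast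
  ultimately show ?thesis by blast
qed

theorem mainTheorem7:
  fixes U Ud Udd :: "real \<Rightarrow> real" and I :: "real set"
    and N :: nat and \<tau> \<epsilon> :: real and Pre :: "nat \<Rightarrow> nat set"
    and eps :: "nat \<Rightarrow> nat \<Rightarrow> real"
    and \<delta> :: "nat \<Rightarrow> nat \<Rightarrow> real" and Ord :: "nat \<Rightarrow> nat \<Rightarrow> nat list"
  assumes I_int: "is_interval I" and I_sup: "{..1} \<subseteq> I"
    and U_deriv: "\<And>x. x \<in> I \<Longrightarrow> (U has_real_derivative Ud x) (at x within I)"
    and Ud_deriv: "\<And>x. x \<in> I \<Longrightarrow> (Ud has_real_derivative Udd x) (at x within I)"
    and Udd_cont: "continuous_on I Udd"
    and Ud_pos: "\<And>x. x \<in> I \<Longrightarrow> Ud x > 0"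
    and Udd_neg: "\<And>x. x \<in> I \<Longrightarrow> Udd x < 0"
    and U0: "U 0 = 0" and U1: "U 1 = 1"
    and N2: "N \<ge> 2"
    and tau: "0 < \<tau>" "\<tau> < 1"
    and Pre_sub: "\<And>i. i < N \<Longrightarrow> Pre i \<subseteq> {..<N} - {i}"
    and Pre_ne: "\<And>i. i < N \<Longrightarrow> Pre i \<noteq> {}"
    and eps_supp: "\<And>i j. i < N \<Longrightarrow> j < N \<Longrightarrow> (eps i j \<noteq> 0 \<longleftrightarrow> j \<in> Pre i)"
    and eps_sum: "\<And>i. i < N \<Longrightarrow> (\<Sum>j<N. eps i j) = \<epsilon>"
    and inhib: "\<And>i j. i < N \<Longrightarrow> j < N \<Longrightarrow> eps i j \<le> 0" and eps_neg: "\<epsilon> < 0"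
    and sc: "strongly_connected N Pre"
    and O_valid: "\<And>l. l \<ge> 1 \<Longrightarrow> valid_ordering N Pre (Ord l)"
    and O_consistent: "\<And>l i. l \<ge> 1 \<Longrightarrow> i < N \<Longrightarrow>
          sorted_wrt (\<lambda>a b. \<delta> (l - 1) a \<ge> \<delta> (l - 1) b) (Ord l i)"
    and \<delta>_step: "\<And>l i. l \<ge> 1 \<Longrightarrow> i < N \<Longrightarrow>
          \<delta> l i = (\<Sum>j<N. stab_matrix U I Ud \<tau> \<epsilon> eps (Ord l) i j * \<delta> (l - 1) j)"
  shows "((\<forall>i<N. \<delta> 0 i \<ge> 0) \<and> \<not> (\<exists>c. \<forall>i<N. \<delta> 0 i = c) \<longrightarrow>
            (\<forall>l \<ge> diameter N Pre. Max ((\<delta> l) ` {..<N}) < Max ((\<delta> 0) ` {..<N})))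
         \<and> (\<exists>c::real. \<forall>i<N. (\<lambda>l. \<delta> l i) \<longlonglongrightarrow> c)"
proof -
  note slope = kick_slope_of_concave_potential[OF I_int I_sup U_deriv Ud_deriv Ud_pos Udd_neg U0 tau]
  obtain \<gamma> where \<gamma>: "0 < \<gamma>" and rows: "\<forall>ord i. i < N \<longrightarrow> distinct (ord i) \<longrightarrow> set (ord i) = Pre i \<longrightarrow>
      (\<forall>j. 0 \<le> stab_matrix U I Ud \<tau> \<epsilon> eps ord i j)
      \<and> (\<Sum>j<N. stab_matrix U I Ud \<tau> \<epsilon> eps ord i j) = 1
      \<and> (\<forall>j\<in>insert i (Pre i). \<gamma> \<le> stab_matrix U I Ud \<tau> \<epsilon> eps ord i j)"
    using stab_matrices_uniformly_positive[OF slope Pre_sub eps_supp inhib eps_sum] by blast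
  have valid: "distinct (Ord (Suc l) i)" "set (Ord (Suc l) i) = Pre i" if "i < N" for l i
    using O_valid[of "Suc l"] that unfolding valid_ordering_def by auto
  interpret consensus_dynamics N Pre "\<lambda>l. stab_matrix U I Ud \<tau> \<epsilon> eps (Ord (Suc l))" \<gamma> \<delta>
  proof
    fix l i j
    assume i: "i < N"
    note row = rows[rule_format, where ord = "Ord (Suc l)", OF i valid[OF i]]
    show "0 \<le> stab_matrix U I Ud \<tau> \<epsilon> eps (Ord (Suc l)) i j"
      and "(\<Sum>j<N. stab_matrix U I Ud \<tau> \<epsilon> eps (Ord (Suc l)) i j) = 1"
      and "\<gamma> \<le> stab_matrix U I Ud \<tau> \<epsilon> eps (Ord (Suc l)) i i"
      and "j \<in> Pre i \<Longrightarrow> \<gamma> \<le> stab_matrix U I Ud \<tau> \<epsilon> eps (Ord (Suc l)) i j"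
      using row by auto
    show "\<delta> (Suc l) i = (\<Sum>j<N. stab_matrix U I Ud \<tau> \<epsilon> eps (Ord (Suc l)) i j * \<delta> l j)"
      using \<delta>_step[of "Suc l" i] i by simp
  qed (use N2 sc \<gamma> in auto)
  have "(\<forall>i<N. 0 \<le> \<delta> 0 i) \<and> \<not> (\<exists>c. \<forall>i<N. \<delta> 0 i = c) \<longrightarrow>
          (\<forall>l \<ge> diameter N Pre. Max (\<delta> l ` {..<N}) < Max (\<delta> 0 ` {..<N}))"
    using max_drops_after_diameter unfolding max_val_def by blast
  then show ?thesis using converges_to_consensus by blast
qed

end
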